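(* Let $C_i=(Q_i,s_i,D_i,E_i)$, $i\in\{1,2\}$, be finite charts. If $s_1\sim s_2$ (i.e. $C_1\sim C_2$), then $\mathsf{bd}([C_1],[C_2])=0$. Otherwise $\mathsf{bd}([C_1],[C_2])=2^{-n}$, where $n\in\mathbb{N}$ is the largest natural number such that $s_1\sim^{(n)}s_2$.
   Context: Fix a set $V=\{v_1,v_2,\dots\}$ of variables and a set $\Sigma$ of letters. A prechart is a triple $(Q,D,E)$ with $D\subseteq Q\times\Sigma\times Q$ and $E\subseteq Q\times V$ finite relations; write $q\xrightarrow{a}q'$ for $(q,a,q')\in D$, $q\rhd v$ for $(q,v)\in E$, $E(q)=\{v\mid (q,v)\in E\}$. Equivalently a prechart is a pair $(Q,\beta)$ with $\beta:Q\to P_{\mathrm{fin}}(\Sigma\times Q+V)$, $\beta(q)=\{(a,q')\mid q\xrightarrow{a}q'\}\cup E(q)$. A chart $(Q,s,D,E)$ is a prechart with a start state $s\in Q$; it is finite if $Q$ is finite. A bisimulation between precharts $(Q_1,D_1,E_1)$, $(Q_2,D_2,E_2)$ is $R\subseteq Q_1\times Q_2$ such that whenever $(q_1,q_2)\in R$: $E_1(q_1)=E_2(q_2)$; if $q_1\xrightarrow{a}q_1'$ there is $q_2'$ with $q_2\xrightarrow{a}q_2'$ and $(q_1',q_2')\in R$; and symmetrically. States are bisimilar ($\sim$) if related by some bisimulation; charts are bisimilar if their start states are. Stratified bisimilarity: $q_1\sim^{(0)}q_2$ always; $q_1\sim^{(n+1)}q_2$ iff $E_1(q_1)=E_2(q_2)$,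 every $q_1\xrightarrow{a}q_1'$ is matched by some $q_2\xrightarrow{a}q_2'$ with $q_1'\sim^{(n)}q_2'$, and symmetrically. $\Omega$ is the set of finite charts modulo bisimilarity, made into a prechart by $[(Q,s,D,E)]\xrightarrow{a}[(Q,s',D,E)]$ iff $s\xrightarrow{a}s'$ and $[(Q,s,D,E)]\rhd v$ iff $s\rhd v$. Behavioural distance: a 1-bounded pseudometric on $X$ is $d:X\times X\to[0,1]$ with $d(x,x)=0$, symmetry and triangle inequality; $D_X$ denotes the set of these, ordered pointwise (a complete lattice). For $d\in D_X$ define $d^\uparrow$ on $\Sigma\times X+V$ by $d^\uparrow((a,x),(a,y))=\tfrac12 d(x,y)$, $d^\uparrow(m,n)=0$ if $m=n$, and $d^\uparrow(m,n)=1$ otherwise. The Hausdorff lifting is $\mathcal H(d)(A,B)=\max\{\sup_{x\in A}\inf_{y\in B}d(x,y),\ \sup_{y\in B}\inf_{x\in A}d(y,x)\}$ for finite $A,B\subseteq X$, with $\sup\emptyset=0$ and $\inf\emptyset=1$. For a prechart $(Q,\beta)$, $\Phi_\beta:D_Q\to D_Q$ is $\Phi_\beta(d)(q_1,q_2)=\mathcal H(d^\uparrow)(\beta(q_1),\beta(q_2))$; it is monotone and $\mathsf{bd}_\beta$ denotes its least fixpoint. $\mathsf{bd}$ denotes $\mathsf{bd}_\beta$ for the prechart $\Omega$. *)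

theory Defs
  imports Complex_Main
begin

text \<open>A chart (Q, s, D, E): states Q, start state s, transitions D, variable outputs E.
  Letters have type 'a, variables type 'v.\<close>

type_synonym ('q, 'a, 'v) chart = "'q set \<times> 'q \<times> ('q \<times> 'a \<times> 'q) set \<times> ('q \<times> 'v) set"

definition finite_chart :: "('q, 'a, 'v) chart \<Rightarrow> bool" where
  "finite_chart C = (case C of (Q, s, D, E) \<Rightarrow>
     finite Q \<and> s \<in> Q \<and> D \<subseteq> Q \<times> UNIV \<times> Q \<and> E \<subseteq> Q \<times> UNIV \<and> finite D \<and> finite E)"

definition outs :: "('q \<times> 'v) set \<Rightarrow> 'q \<Rightarrow> 'v set" where
  "outs E q = {v. (q, v) \<in> E}"

definition is_bisim ::
  "'q1 set \<Rightarrow> ('q1 \<times> 'a \<times> 'q1) set \<Rightarrow> ('q1 \<times> 'v) set \<Rightarrow>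
   'q2 set \<Rightarrow> ('q2 \<times> 'a \<times> 'q2) set \<Rightarrow> ('q2 \<times> 'v) set \<Rightarrow> ('q1 \<times> 'q2) set \<Rightarrow> bool" where
  "is_bisim Q1 D1 E1 Q2 D2 E2 R \<longleftrightarrow> R \<subseteq> Q1 \<times> Q2 \<and>
     (\<forall>(q1, q2) \<in> R. outs E1 q1 = outs E2 q2 \<and>
        (\<forall>a q1'. (q1, a, q1') \<in> D1 \<longrightarrow> (\<exists>q2'. (q2, a, q2') \<in> D2 \<and> (q1', q2') \<in> R)) \<and>
        (\<forall>a q2'. (q2, a, q2') \<in> D2 \<longrightarrow> (\<exists>q1'. (q1, a, q1') \<in> D1 \<and> (q1', q2') \<in> R)))"

definition chart_bisim :: "('q1, 'a, 'v) chart \<Rightarrow> ('q2, 'a, 'v) chart \<Rightarrow> bool" where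
  "chart_bisim C1 C2 = (case C1 of (Q1, s1, D1, E1) \<Rightarrow> case C2 of (Q2, s2, D2, E2) \<Rightarrow>
     (\<exists>R. is_bisim Q1 D1 E1 Q2 D2 E2 R \<and> (s1, s2) \<in> R))"

fun sbisim :: "nat \<Rightarrow> ('q1 \<times> 'a \<times> 'q1) set \<Rightarrow> ('q1 \<times> 'v) set \<Rightarrow>
   ('q2 \<times> 'a \<times> 'q2) set \<Rightarrow> ('q2 \<times> 'v) set \<Rightarrow> 'q1 \<Rightarrow> 'q2 \<Rightarrow> bool" where
  "sbisim 0 D1 E1 D2 E2 q1 q2 = True"
| "sbisim (Suc n) D1 E1 D2 E2 q1 q2 = (outs E1 q1 = outs E2 q2 \<and>
     (\<forall>a q1'. (q1, a, q1') \<in> D1 \<longrightarrow> (\<exists>q2'. (q2, a, q2') \<in> D2 \<and> sbisim n D1 E1 D2 E2 q1' q2')) \<and>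
     (\<forall>a q2'. (q2, a, q2') \<in> D2 \<longrightarrow> (\<exists>q1'. (q1, a, q1') \<in> D1 \<and> sbisim n D1 E1 D2 E2 q1' q2')))"

text \<open>Every finite chart is isomorphic to one whose states are natural numbers, so
  \<Omega> (finite charts modulo bisimilarity) is represented by classes of nat-state charts.\<close>

type_synonym ('a, 'v) omega = "(nat, 'a, 'v) chart set"

definition cls :: "('q, 'a, 'v) chart \<Rightarrow> ('a, 'v) omega" where
  "cls C = {C' :: (nat, 'a, 'v) chart. finite_chart C' \<and> chart_bisim C' C}"

definition Omega :: "('a, 'v) omega set" where
  "Omega = {cls C | C :: (nat, 'a, 'v) chart. finite_chart C}"

definition om_trans :: "('a, 'v) omega \<Rightarrow> 'a \<Rightarrow> ('a, 'v) omega \<Rightarrow> bool" where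
  "om_trans w a w' \<longleftrightarrow> (\<exists>Q s D E s'. (Q, s, D, E) \<in> w \<and> (s, a, s') \<in> D \<and> w' = cls (Q, s', D, E))"

definition om_out :: "('a, 'v) omega \<Rightarrow> 'v \<Rightarrow> bool" where
  "om_out w v \<longleftrightarrow> (\<exists>Q s D E. (Q, s, D, E) \<in> w \<and> (s, v) \<in> E)"

definition om_beta :: "('a, 'v) omega \<Rightarrow> (('a \<times> ('a, 'v) omega) + 'v) set" where
  "om_beta w = {Inl (a, w') | a w'. om_trans w a w'} \<union> {Inr v | v. om_out w v}"

definition pseudometric_on :: "'x set \<Rightarrow> ('x \<Rightarrow> 'x \<Rightarrow> real) \<Rightarrow> bool" where
  "pseudometric_on X d \<longleftrightarrow>
     (\<forall>x\<in>X. \<forall>y\<in>X. 0 \<le> d x y \<and> d x y \<le> 1) \<and>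
     (\<forall>x\<in>X. d x x = 0) \<and>
     (\<forall>x\<in>X. \<forall>y\<in>X. d x y = d y x) \<and>
     (\<forall>x\<in>X. \<forall>y\<in>X. \<forall>z\<in>X. d x z \<le> d x y + d y z)"

text \<open>D_X: 1-bounded pseudometrics on X, represented extensionally (value 0 outside X).\<close>
definition DX :: "'x set \<Rightarrow> ('x \<Rightarrow> 'x \<Rightarrow> real) set" where
  "DX X = {d. pseudometric_on X d \<and> (\<forall>x y. x \<notin> X \<or> y \<notin> X \<longrightarrow> d x y = 0)}"

definition lift :: "('x \<Rightarrow> 'x \<Rightarrow> real) \<Rightarrow> (('a \<times> 'x) + 'v) \<Rightarrow> (('a \<times> 'x) + 'v) \<Rightarrow> real" where
  "lift d m n = (case (m, n) of
      (Inl (a, x), Inl (b, y)) \<Rightarrow> if a = b then d x y / 2 else 1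
    | _ \<Rightarrow> if m = n then 0 else 1)"

definition supr :: "real set \<Rightarrow> real" where
  "supr S = (if S = {} then 0 else Max S)"

definition infr :: "real set \<Rightarrow> real" where
  "infr S = (if S = {} then 1 else Min S)"

definition hausdorff :: "('y \<Rightarrow> 'y \<Rightarrow> real) \<Rightarrow> 'y set \<Rightarrow> 'y set \<Rightarrow> real" where
  "hausdorff d A B = max (supr ((\<lambda>x. infr ((\<lambda>y. d x y) ` B)) ` A))
                         (supr ((\<lambda>y. infr ((\<lambda>x. d y x) ` A)) ` B))"

definition Phi :: "'x set \<Rightarrow> ('x \<Rightarrow> (('a \<times> 'x) + 'v) set) \<Rightarrow> ('x \<Rightarrow> 'x \<Rightarrow> real) \<Rightarrow> ('x \<Rightarrow> 'x \<Rightarrow> real)" where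
  "Phi X beta d = (\<lambda>q1 q2. if q1 \<in> X \<and> q2 \<in> X then hausdorff (lift d) (beta q1) (beta q2) else 0)"

definition bd_of :: "'x set \<Rightarrow> ('x \<Rightarrow> (('a \<times> 'x) + 'v) set) \<Rightarrow> ('x \<Rightarrow> 'x \<Rightarrow> real)" where
  "bd_of X beta = (THE d. d \<in> DX X \<and> Phi X beta d = d \<and>
      (\<forall>d' \<in> DX X. Phi X beta d' = d' \<longrightarrow> (\<forall>x y. d x y \<le> d' x y)))"

definition bd :: "('a, 'v) omega \<Rightarrow> ('a, 'v) omega \<Rightarrow> real" where
  "bd = bd_of Omega om_beta"

end

theory Submission
  imports Defs
begin

(*
  Stratified bisimilarity is the iterated relation lifting of the branching functor
  P_fin(Sigma x - + V), and for symmetric d the Hausdorff lifting satisfies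
  H(d^)(beta x, beta y) < 2^-n exactly when beta x and beta y are related by the lifting of
  {(x', y'). d x' y' < 2^(1-n)}. Hence, on any image-finite prechart, the distance that is 0 when
  x ~(n) y for all n, and 2^-n for the largest such n otherwise, is a fixpoint of Phi: both sides
  take values in {0} and the powers of 1/2, where a value is determined by the 2^-n it lies below.
  Induction on n shows that d x y < 2^(1-n) implies x ~(n) y for every fixpoint d in D_X, so this
  distance is the least fixpoint. On Omega the levels of [C1] and [C2] are those of s1 and s2, and
  for finite charts agreement at all levels is bisimilarity, because a state has only finitely
  many successors to choose a matching one from.
*)

section \<open>Stratified bisimilarity on a prechart\<close>

abbreviation rel_branching ::
  "('x \<Rightarrow> 'y \<Rightarrow> bool) \<Rightarrow> (('a \<times> 'x) + 'v) set \<Rightarrow> (('a \<times> 'y) + 'v) set \<Rightarrow> bool" where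
  "rel_branching R \<equiv> rel_set (rel_sum (rel_prod (=) R) (=))"

lemma rel_branching_iff:
  "rel_branching R A B \<longleftrightarrow>
     (\<forall>v. Inr v \<in> A \<longleftrightarrow> Inr v \<in> B) \<and>
     (\<forall>a x. Inl (a, x) \<in> A \<longrightarrow> (\<exists>y. Inl (a, y) \<in> B \<and> R x y)) \<and>
     (\<forall>a y. Inl (a, y) \<in> B \<longrightarrow> (\<exists>x. Inl (a, x) \<in> A \<and> R x y))"
  unfolding rel_set_def Ball_def
  by (auto simp: rel_sum.simps rel_prod_conv split: sum.split) (metis sumE surj_pair)+

lemma rel_branching_mono_on:
  assumes "rel_branching R A B"
    and "\<And>a x b y. Inl (a, x) \<in> A \<Longrightarrow> Inl (b, y) \<in> B \<Longrightarrow> R x y \<Longrightarrow> S x y"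
  shows "rel_branching S A B"
  using assms unfolding rel_branching_iff by blast

fun strat_bisim :: "('x \<Rightarrow> (('a \<times> 'x) + 'v) set) \<Rightarrow> nat \<Rightarrow> 'x \<Rightarrow> 'x \<Rightarrow> bool" where
  "strat_bisim \<beta> 0 x y = True"
| "strat_bisim \<beta> (Suc n) x y = rel_branching (strat_bisim \<beta> n) (\<beta> x) (\<beta> y)"

declare strat_bisim.simps(2) [simp del]

lemma strat_bisim_refl: "strat_bisim \<beta> n x x"
  by (induction n arbitrary: x) (auto simp: strat_bisim.simps(2) rel_branching_iff)

lemma strat_bisim_sym: "strat_bisim \<beta> n x y \<Longrightarrow> strat_bisim \<beta> n y x"
proof (induction n arbitrary: x y)
  case (Suc n)
  then show ?case unfolding strat_bisim.simps rel_branching_iff by blast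
qed simp

lemma strat_bisim_trans:
  "strat_bisim \<beta> n x y \<Longrightarrow> strat_bisim \<beta> n y z \<Longrightarrow> strat_bisim \<beta> n x z"
proof (induction n arbitrary: x y z)
  case (Suc n)
  then show ?case unfolding strat_bisim.simps rel_branching_iff by meson
qed simp

lemma strat_bisim_Suc_imp: "strat_bisim \<beta> (Suc n) x y \<Longrightarrow> strat_bisim \<beta> n x y"
proof (induction n arbitrary: x y)
  case (Suc n)
  have "rel_branching (strat_bisim \<beta> (Suc n)) (\<beta> x) (\<beta> y)"
    using Suc.prems by (simp only: strat_bisim.simps(2))
  then have "rel_branching (strat_bisim \<beta> n) (\<beta> x) (\<beta> y)"
    by (rule rel_branching_mono_on) (rule Suc.IH)
  then show ?case by (simp only: strat_bisim.simps(2))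
qed simp

lemma strat_bisim_antimono: "m \<le> n \<Longrightarrow> strat_bisim \<beta> n x y \<Longrightarrow> strat_bisim \<beta> m x y"
  by (induction n rule: dec_induct) (blast dest: strat_bisim_Suc_imp)+

section \<open>The depth distance\<close>

definition half_powers :: "real set" where
  "half_powers = insert 0 (range (\<lambda>n. 1 / 2 ^ n))"

lemma zero_in_half_powers [simp]: "0 \<in> half_powers"
  and half_power_in_half_powers [simp]: "1 / 2 ^ n \<in> half_powers"
  unfolding half_powers_def by blast+

lemma one_in_half_powers [simp]: "1 \<in> half_powers"
  using half_power_in_half_powers[of 0] by simp

lemma half_powers_bounds: "a \<in> half_powers \<Longrightarrow> 0 \<le> a \<and> a \<le> 1"
  unfolding half_powers_def by auto

lemma half_in_half_powers: "a \<in> half_powers \<Longrightarrow> a / 2 \<in> half_powers"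
  unfolding half_powers_def by (auto intro: range_eqI[of _ _ "Suc _"])

lemma half_powers_eqI:
  assumes "a \<in> half_powers" "b \<in> half_powers" "\<And>n. a < 1 / 2 ^ n \<longleftrightarrow> b < 1 / 2 ^ n"
  shows "a = b"
proof -
  have less_iff: "(1::real) / 2 ^ i < 1 / 2 ^ j \<longleftrightarrow> j < i" for i j
    by (simp add: divide_simps)
  show ?thesis
    using assms(1,2) unfolding half_powers_def
  proof (elim insertE rangeE)
    fix i assume "a = 0" "b = 1 / 2 ^ i"
    then show "a = b" using assms(3)[of i] by simp
  next
    fix i assume "a = 1 / 2 ^ i" "b = 0"
    then show "a = b" using assms(3)[of i] by simp
  next
    fix i j assume "a = 1 / 2 ^ i" "b = 1 / 2 ^ j"
    then show "a = b" using assms(3)[of i] assms(3)[of j] less_iff[of i j] less_iff[of j i] by force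
  qed simp
qed

text \<open>If k is the least level separating x and y, they agree up to level k - 1, so the
  distance 2 ^ -(k - 1) is written 2 / 2 ^ k.\<close>
definition depth_dist :: "('x \<Rightarrow> (('a \<times> 'x) + 'v) set) \<Rightarrow> 'x \<Rightarrow> 'x \<Rightarrow> real" where
  "depth_dist \<beta> x y =
     (if \<forall>n. strat_bisim \<beta> n x y then 0 else 2 / 2 ^ (LEAST n. \<not> strat_bisim \<beta> n x y))"

lemma depth_dist_less_iff: "depth_dist \<beta> x y < 2 / 2 ^ n \<longleftrightarrow> strat_bisim \<beta> n x y"
proof (cases "\<forall>n. strat_bisim \<beta> n x y")
  case False
  define k where "k = (LEAST n. \<not> strat_bisim \<beta> n x y)"
  have "\<not> strat_bisim \<beta> k x y"
    using False unfolding k_def by (metis LeastI_ex)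
  moreover have "strat_bisim \<beta> n x y" if "n < k"
    using that not_less_Least unfolding k_def by blast
  ultimately have "strat_bisim \<beta> n x y \<longleftrightarrow> n < k"
    by (meson strat_bisim_antimono not_less)
  moreover have "(2::real) / 2 ^ k < 2 / 2 ^ n \<longleftrightarrow> n < k"
    by (simp add: divide_simps)
  moreover have "depth_dist \<beta> x y = 2 / 2 ^ k"
    using False by (simp add: depth_dist_def k_def)
  ultimately show ?thesis
    by simp
qed (simp add: depth_dist_def)

lemma depth_dist_eq:
  assumes "strat_bisim \<beta> j x y" and "\<not> strat_bisim \<beta> (Suc j) x y"
  shows "depth_dist \<beta> x y = 1 / 2 ^ j"
proof -
  have "(LEAST n. \<not> strat_bisim \<beta> n x y) = Suc j"
  proof (rule Least_equality)
    show "\<not> strat_bisim \<beta> (Suc j) x y" by (fact assms(2))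
    show "Suc j \<le> m" if "\<not> strat_bisim \<beta> m x y" for m
      using that assms(1) by (meson not_less_eq_eq strat_bisim_antimono)
  qed
  then show ?thesis
    using assms(2) by (auto simp: depth_dist_def)
qed

lemma depth_dist_in_half_powers: "depth_dist \<beta> x y \<in> half_powers"
proof (cases "\<forall>n. strat_bisim \<beta> n x y")
  case False
  then have "\<exists>j. \<not> \<not> strat_bisim \<beta> j x y \<and> \<not> strat_bisim \<beta> (Suc j) x y"
    by (intro exists_least_lemma) simp_all
  then show ?thesis
    using depth_dist_eq by fastforce
qed (simp add: depth_dist_def)

lemma depth_dist_nonneg: "0 \<le> depth_dist \<beta> x y"
  and depth_dist_le_one: "depth_dist \<beta> x y \<le> 1"
  by (simp_all add: half_powers_bounds[OF depth_dist_in_half_powers])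

lemma depth_dist_le:
  assumes "0 \<le> r" and "\<And>n. r < 2 / 2 ^ n \<Longrightarrow> strat_bisim \<beta> n x y"
  shows "depth_dist \<beta> x y \<le> r"
proof (rule ccontr)
  assume "\<not> depth_dist \<beta> x y \<le> r"
  moreover obtain j where j: "depth_dist \<beta> x y = 1 / 2 ^ j"
    using depth_dist_in_half_powers[of \<beta> x y] calculation assms(1) unfolding half_powers_def by auto
  ultimately have "strat_bisim \<beta> (Suc j) x y"
    using assms(2)[of "Suc j"] by simp
  then show False
    using depth_dist_less_iff[of \<beta> x y "Suc j"] j by simp
qed

lemma depth_dist_self: "depth_dist \<beta> x x = 0"
  by (simp add: depth_dist_def strat_bisim_refl)

lemma depth_dist_sym: "depth_dist \<beta> x y = depth_dist \<beta> y x"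
proof -
  have le: "depth_dist \<beta> x y \<le> depth_dist \<beta> y x" for x y
    by (rule depth_dist_le) (auto simp: depth_dist_nonneg depth_dist_less_iff intro: strat_bisim_sym)
  show ?thesis using le[of x y] le[of y x] by (rule antisym)
qed

lemma depth_dist_triangle: "depth_dist \<beta> x z \<le> depth_dist \<beta> x y + depth_dist \<beta> y z"
proof -
  have "depth_dist \<beta> x z \<le> max (depth_dist \<beta> x y) (depth_dist \<beta> y z)"
  proof (rule depth_dist_le)
    show "0 \<le> max (depth_dist \<beta> x y) (depth_dist \<beta> y z)"
      by (simp add: depth_dist_nonneg le_max_iff_disj)
    show "strat_bisim \<beta> n x z" if "max (depth_dist \<beta> x y) (depth_dist \<beta> y z) < 2 / 2 ^ n" for n
      using that strat_bisim_trans by (auto simp: depth_dist_less_iff)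
  qed
  then show ?thesis
    using depth_dist_nonneg[of \<beta> x y] depth_dist_nonneg[of \<beta> y z] by linarith
qed

section \<open>Behavioural distance on image-finite precharts\<close>

lemma supr_in: "finite T \<Longrightarrow> T \<subseteq> S \<Longrightarrow> 0 \<in> S \<Longrightarrow> supr T \<in> S"
  unfolding supr_def using Max_in by auto

lemma infr_in: "finite T \<Longrightarrow> T \<subseteq> S \<Longrightarrow> 1 \<in> S \<Longrightarrow> infr T \<in> S"
  unfolding infr_def using Min_in by auto

lemma hausdorff_in:
  assumes "finite A" "finite B" "0 \<in> S" "1 \<in> S" "\<And>x y. f x y \<in> S"
  shows "hausdorff f A B \<in> S"
  unfolding hausdorff_def max_def using assms by (auto intro!: supr_in infr_in)

lemma hausdorff_less_iff:
  assumes "finite A" "finite B" "0 < c" "c \<le> 1"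
  shows "hausdorff f A B < c \<longleftrightarrow> (\<forall>x\<in>A. \<exists>y\<in>B. f x y < c) \<and> (\<forall>y\<in>B. \<exists>x\<in>A. f y x < c)"
proof -
  have "supr ((\<lambda>x. infr (g x ` B')) ` A') < c \<longleftrightarrow> (\<forall>x\<in>A'. \<exists>y\<in>B'. g x y < c)"
    if "finite A'" "finite B'" for g :: "'a \<Rightarrow> 'a \<Rightarrow> real" and A' B'
    using that assms(3,4) by (auto simp: supr_def infr_def Min_less_iff)
  then show ?thesis
    unfolding hausdorff_def using assms(1,2) by simp
qed

lemma lift_less_half_power_iff:
  "lift d e e' < 1 / 2 ^ n \<longleftrightarrow> rel_sum (rel_prod (=) (\<lambda>x y. d x y < 2 / 2 ^ n)) (=) e e'"
proof -
  have "\<not> (1::real) < 1 / 2 ^ n" by (simp add: divide_simps not_less)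
  then show ?thesis
    by (auto simp: lift_def rel_sum.simps rel_prod_conv divide_simps split: sum.split prod.split)
qed

lemma hausdorff_lift_less_iff:
  fixes A B :: "(('a \<times> 'x) + 'v) set"
  assumes "finite A" "finite B" and sym: "\<And>x y. d x y = d y x"
  shows "hausdorff (lift d) A B < 1 / 2 ^ n \<longleftrightarrow> rel_branching (\<lambda>x y. d x y < 2 / 2 ^ n) A B"
proof -
  have lift_sym: "lift d e e' = lift d e' e" for e e' :: "('a \<times> 'x) + 'v"
    by (auto simp: lift_def sym split: sum.split prod.split)
  have "hausdorff (lift d) A B < 1 / 2 ^ n \<longleftrightarrow>
      (\<forall>e\<in>A. \<exists>e'\<in>B. lift d e e' < 1 / 2 ^ n) \<and> (\<forall>e'\<in>B. \<exists>e\<in>A. lift d e e' < 1 / 2 ^ n)"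
    using assms(1,2) by (simp add: hausdorff_less_iff) (metis lift_sym)
  then show ?thesis
    by (simp only: lift_less_half_power_iff rel_set_def)
qed

lemma lift_in_half_powers:
  "(\<And>x y. d x y \<in> half_powers) \<Longrightarrow> lift d e e' \<in> half_powers"
  by (auto simp: lift_def half_in_half_powers split: sum.split prod.split)

lemma DX_sym: "d \<in> DX X \<Longrightarrow> d x y = d y x"
  unfolding DX_def pseudometric_on_def by (cases "x \<in> X \<and> y \<in> X") auto

lemma DX_nonneg: "d \<in> DX X \<Longrightarrow> 0 \<le> d x y"
  unfolding DX_def pseudometric_on_def by (cases "x \<in> X \<and> y \<in> X") auto

locale image_finite_prechart =
  fixes X :: "'x set" and \<beta> :: "'x \<Rightarrow> (('a \<times> 'x) + 'v) set"
  assumes succ_closed: "x \<in> X \<Longrightarrow> Inl (a, x') \<in> \<beta> x \<Longrightarrow> x' \<in> X"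
    and finite_branching: "x \<in> X \<Longrightarrow> finite (\<beta> x)"
begin

definition depth_metric :: "'x \<Rightarrow> 'x \<Rightarrow> real" where
  "depth_metric x y = (if x \<in> X \<and> y \<in> X then depth_dist \<beta> x y else 0)"

lemma depth_metric_in_DX: "depth_metric \<in> DX X"
  unfolding DX_def pseudometric_on_def depth_metric_def
  by (auto simp: depth_dist_nonneg depth_dist_le_one depth_dist_self depth_dist_sym
      depth_dist_triangle)

lemma rel_branching_depth_metric_iff:
  assumes "x \<in> X" "y \<in> X"
  shows "rel_branching (\<lambda>x' y'. depth_metric x' y' < 2 / 2 ^ n) (\<beta> x) (\<beta> y) \<longleftrightarrow>
    strat_bisim \<beta> (Suc n) x y"
  unfolding strat_bisim.simps(2)
  by (intro iffI; erule rel_branching_mono_on)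
    (use assms succ_closed in \<open>auto simp: depth_metric_def depth_dist_less_iff\<close>)

lemma Phi_depth_metric: "Phi X \<beta> depth_metric = depth_metric"
proof (intro ext)
  fix x y
  show "Phi X \<beta> depth_metric x y = depth_metric x y"
  proof (cases "x \<in> X \<and> y \<in> X")
    case True
    have fin: "finite (\<beta> x)" "finite (\<beta> y)"
      using True finite_branching by auto
    have sym: "depth_metric x' y' = depth_metric y' x'" for x' y'
      using depth_metric_in_DX by (rule DX_sym)
    have "hausdorff (lift depth_metric) (\<beta> x) (\<beta> y) = depth_dist \<beta> x y"
    proof (rule half_powers_eqI)
      show "hausdorff (lift depth_metric) (\<beta> x) (\<beta> y) \<in> half_powers"
        using fin by (intro hausdorff_in lift_in_half_powers)
          (auto simp: depth_metric_def depth_dist_in_half_powers)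
      show "depth_dist \<beta> x y \<in> half_powers"
        by (rule depth_dist_in_half_powers)
      show "hausdorff (lift depth_metric) (\<beta> x) (\<beta> y) < 1 / 2 ^ n \<longleftrightarrow> depth_dist \<beta> x y < 1 / 2 ^ n" for n
        using depth_dist_less_iff[of \<beta> x y "Suc n"] True
        by (simp add: hausdorff_lift_less_iff[OF fin sym] rel_branching_depth_metric_iff)
    qed
    then show ?thesis
      using True by (simp add: Phi_def depth_metric_def)
  qed (auto simp: Phi_def depth_metric_def)
qed

lemma depth_metric_least:
  assumes d: "d \<in> DX X" and fixpoint: "Phi X \<beta> d = d"
  shows "depth_metric x y \<le> d x y"
proof -
  have d_sym: "d x' y' = d y' x'" for x' y'
    using d by (rule DX_sym)
  have "strat_bisim \<beta> n x y" if "x \<in> X" "y \<in> X" "d x y < 2 / 2 ^ n" for n x y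
    using that
  proof (induction n arbitrary: x y)
    case (Suc n)
    have "hausdorff (lift d) (\<beta> x) (\<beta> y) = d x y"
      using fun_cong[OF fun_cong[OF fixpoint, of x], of y] Suc.prems(1,2) by (simp add: Phi_def)
    then have "rel_branching (\<lambda>x' y'. d x' y' < 2 / 2 ^ n) (\<beta> x) (\<beta> y)"
      using Suc.prems(3) hausdorff_lift_less_iff[where d = d, OF finite_branching[OF Suc.prems(1)]
          finite_branching[OF Suc.prems(2)] d_sym]
      by simp
    then have "rel_branching (strat_bisim \<beta> n) (\<beta> x) (\<beta> y)"
      by (rule rel_branching_mono_on) (use Suc.IH Suc.prems(1,2) succ_closed in blast)
    then show ?case
      by (simp only: strat_bisim.simps(2))
  qed simp
  then show ?thesis
    using DX_nonneg[OF d] by (auto simp: depth_metric_def intro: depth_dist_le)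
qed

theorem bd_of_eq_depth_metric: "bd_of X \<beta> = depth_metric"
  unfolding bd_of_def
proof (rule the_equality)
  show "depth_metric \<in> DX X \<and> Phi X \<beta> depth_metric = depth_metric \<and>
      (\<forall>d \<in> DX X. Phi X \<beta> d = d \<longrightarrow> (\<forall>x y. depth_metric x y \<le> d x y))"
    using depth_metric_in_DX Phi_depth_metric depth_metric_least by blast
  show "d = depth_metric"
    if "d \<in> DX X \<and> Phi X \<beta> d = d \<and>
      (\<forall>d' \<in> DX X. Phi X \<beta> d' = d' \<longrightarrow> (\<forall>x y. d x y \<le> d' x y))" for d
    using that depth_metric_in_DX Phi_depth_metric depth_metric_least by (metis antisym ext)
qed

end

section \<open>Bisimilarity of finite charts\<close>

lemma is_bisimI:
  assumes "R \<subseteq> Q1 \<times> Q2"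
    and "\<And>q1 q2. (q1, q2) \<in> R \<Longrightarrow> outs E1 q1 = outs E2 q2"
    and "\<And>q1 q2 a q1'. (q1, q2) \<in> R \<Longrightarrow> (q1, a, q1') \<in> D1 \<Longrightarrow>
      \<exists>q2'. (q2, a, q2') \<in> D2 \<and> (q1', q2') \<in> R"
    and "\<And>q1 q2 a q2'. (q1, q2) \<in> R \<Longrightarrow> (q2, a, q2') \<in> D2 \<Longrightarrow>
      \<exists>q1'. (q1, a, q1') \<in> D1 \<and> (q1', q2') \<in> R"
  shows "is_bisim Q1 D1 E1 Q2 D2 E2 R"
  using assms unfolding is_bisim_def by blast

lemma is_bisim_converse:
  "is_bisim Q1 D1 E1 Q2 D2 E2 R \<Longrightarrow> is_bisim Q2 D2 E2 Q1 D1 E1 (R\<inverse>)"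
  unfolding is_bisim_def by fastforce

lemma is_bisim_relcomp:
  assumes "is_bisim Q1 D1 E1 Q2 D2 E2 R" and "is_bisim Q2 D2 E2 Q3 D3 E3 S"
  shows "is_bisim Q1 D1 E1 Q3 D3 E3 (R O S)"
  using assms unfolding is_bisim_def Ball_def
  by (clarsimp simp: subset_iff) (intro conjI allI impI; elim relcompE; simp; meson relcompI)

lemma is_bisim_rename:
  assumes inj: "inj_on f Q" and D: "D \<subseteq> Q \<times> UNIV \<times> Q" and E: "E \<subseteq> Q \<times> UNIV"
  defines "D' \<equiv> (\<lambda>(p, a, q). (f p, a, f q)) ` D" and "E' \<equiv> (\<lambda>(p, v). (f p, v)) ` E"
  shows "is_bisim (f ` Q) D' E' Q D E ((\<lambda>q. (f q, q)) ` Q)"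
proof (rule is_bisimI)
  have eq: "f p = f q \<longleftrightarrow> p = q" if "p \<in> Q" "q \<in> Q" for p q
    using inj that by (auto simp: inj_on_def)
  have E': "(f q, v) \<in> E' \<longleftrightarrow> (q, v) \<in> E" if "q \<in> Q" for q v
    using that E eq unfolding E'_def by auto
  have D': "(f q, a, x) \<in> D' \<longleftrightarrow> (\<exists>q'. (q, a, q') \<in> D \<and> x = f q')" if "q \<in> Q" for q a x
    using that D eq unfolding D'_def by (auto intro: rev_image_eqI)
  show "outs E' p = outs E q" if "(p, q) \<in> (\<lambda>q. (f q, q)) ` Q" for p q
    using that E' unfolding outs_def by auto
  show "\<exists>q'. (q, a, q') \<in> D \<and> (p', q') \<in> (\<lambda>q. (f q, q)) ` Q"
    if "(p, q) \<in> (\<lambda>q. (f q, q)) ` Q" "(p, a, p') \<in> D'" for p q a p'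
    using that D D' by blast
  show "\<exists>p'. (p, a, p') \<in> D' \<and> (p', q') \<in> (\<lambda>q. (f q, q)) ` Q"
    if "(p, q) \<in> (\<lambda>q. (f q, q)) ` Q" "(q, a, q') \<in> D" for p q a q'
    using that D D' by blast
qed auto

lemma chart_bisim_sym: "chart_bisim C1 C2 \<Longrightarrow> chart_bisim C2 C1"
  unfolding chart_bisim_def by (auto split: prod.splits) (meson is_bisim_converse converseI)

lemma chart_bisim_trans: "chart_bisim C1 C2 \<Longrightarrow> chart_bisim C2 C3 \<Longrightarrow> chart_bisim C1 C3"
  unfolding chart_bisim_def by (auto split: prod.splits) (meson is_bisim_relcomp relcompI)

lemma chart_bisim_outs:
  "chart_bisim (Q1, s1, D1, E1) (Q2, s2, D2, E2) \<Longrightarrow> outs E1 s1 = outs E2 s2"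
  unfolding chart_bisim_def is_bisim_def by fast

lemma chart_bisim_step:
  assumes "chart_bisim (Q1, s1, D1, E1) (Q2, s2, D2, E2)" and "(s1, a, s1') \<in> D1"
  obtains s2' where "(s2, a, s2') \<in> D2" and "chart_bisim (Q1, s1', D1, E1) (Q2, s2', D2, E2)"
proof -
  obtain R where R: "is_bisim Q1 D1 E1 Q2 D2 E2 R" "(s1, s2) \<in> R"
    using assms(1) unfolding chart_bisim_def by auto
  then obtain s2' where s2': "(s2, a, s2') \<in> D2" "(s1', s2') \<in> R"
    using assms(2) unfolding is_bisim_def by fast
  show thesis
    by (rule that[OF s2'(1)]) (use R(1) s2'(2) in \<open>auto simp: chart_bisim_def\<close>)
qed

lemma sbisim_Suc_imp: "sbisim (Suc n) D1 E1 D2 E2 q1 q2 \<Longrightarrow> sbisim n D1 E1 D2 E2 q1 q2"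
proof (induction n arbitrary: q1 q2)
  case (Suc n)
  have step: "outs E1 q1 = outs E2 q2 \<and>
     (\<forall>a q1'. (q1, a, q1') \<in> D1 \<longrightarrow> (\<exists>q2'. (q2, a, q2') \<in> D2 \<and> sbisim (Suc n) D1 E1 D2 E2 q1' q2')) \<and>
     (\<forall>a q2'. (q2, a, q2') \<in> D2 \<longrightarrow> (\<exists>q1'. (q1, a, q1') \<in> D1 \<and> sbisim (Suc n) D1 E1 D2 E2 q1' q2'))"
    using Suc.prems unfolding sbisim.simps(2)[of "Suc n"] .
  show ?case
    unfolding sbisim.simps(2)[of n] using step Suc.IH by blast
qed simp

lemma sbisim_antimono: "m \<le> n \<Longrightarrow> sbisim n D1 E1 D2 E2 q1 q2 \<Longrightarrow> sbisim m D1 E1 D2 E2 q1 q2"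
  by (induction n rule: dec_induct) (blast dest: sbisim_Suc_imp)+

lemma sbisim_sym: "sbisim n D1 E1 D2 E2 q1 q2 \<Longrightarrow> sbisim n D2 E2 D1 E1 q2 q1"
proof (induction n arbitrary: q1 q2)
  case (Suc n)
  then show ?case
    unfolding sbisim.simps(2)[of n] by metis
qed simp

lemma finite_antimono_ex_forall:
  fixes P :: "nat \<Rightarrow> 'a \<Rightarrow> bool"
  assumes "finite S" and "\<And>n. \<exists>y\<in>S. P n y" and "\<And>m n y. m \<le> n \<Longrightarrow> P n y \<Longrightarrow> P m y"
  shows "\<exists>y\<in>S. \<forall>n. P n y"
proof (rule ccontr)
  assume "\<not> (\<exists>y\<in>S. \<forall>n. P n y)"
  then obtain f where f: "\<forall>y\<in>S. \<not> P (f y) y"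
    by (metis bchoice)
  obtain y where "y \<in> S" and "P (Max (f ` S)) y"
    using assms(2) by blast
  moreover have "f y \<le> Max (f ` S)"
    using \<open>finite S\<close> \<open>y \<in> S\<close> by simp
  ultimately show False
    using f assms(3) by blast
qed

lemma all_sbisim_successor:
  assumes "finite D2" and all: "\<forall>n. sbisim n D1 E1 D2 E2 q1 q2" and "(q1, a, q1') \<in> D1"
  obtains q2' where "(q2, a, q2') \<in> D2" and "\<forall>n. sbisim n D1 E1 D2 E2 q1' q2'"
proof -
  have "{q2'. (q2, a, q2') \<in> D2} \<subseteq> snd ` snd ` D2"
    by force
  then have "finite {q2'. (q2, a, q2') \<in> D2}"
    using \<open>finite D2\<close> by (simp add: finite_subset)
  moreover have "\<exists>q2' \<in> {q2'. (q2, a, q2') \<in> D2}. sbisim n D1 E1 D2 E2 q1' q2'" for n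
    using all[rule_format, of "Suc n"] \<open>(q1, a, q1') \<in> D1\<close> by auto
  ultimately have "\<exists>q2' \<in> {q2'. (q2, a, q2') \<in> D2}. \<forall>n. sbisim n D1 E1 D2 E2 q1' q2'"
    by (rule finite_antimono_ex_forall) (rule sbisim_antimono)
  then show thesis
    using that by blast
qed

lemma chart_bisim_if_all_sbisim:
  assumes fin1: "finite_chart (Q1, s1, D1, E1)" and fin2: "finite_chart (Q2, s2, D2, E2)"
    and all: "\<forall>n. sbisim n D1 E1 D2 E2 s1 s2"
  shows "chart_bisim (Q1, s1, D1, E1) (Q2, s2, D2, E2)"
proof -
  have D1: "D1 \<subseteq> Q1 \<times> UNIV \<times> Q1" "finite D1" and D2: "D2 \<subseteq> Q2 \<times> UNIV \<times> Q2" "finite D2"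
    using fin1 fin2 by (auto simp: finite_chart_def)
  define R where "R = {(q1, q2) \<in> Q1 \<times> Q2. \<forall>n. sbisim n D1 E1 D2 E2 q1 q2}"
  have "is_bisim Q1 D1 E1 Q2 D2 E2 R"
  proof (rule is_bisimI)
    show "outs E1 q1 = outs E2 q2" if "(q1, q2) \<in> R" for q1 q2
      using that unfolding R_def by (auto dest: spec[of _ 1])
    show "\<exists>q2'. (q2, a, q2') \<in> D2 \<and> (q1', q2') \<in> R"
      if related: "(q1, q2) \<in> R" and step: "(q1, a, q1') \<in> D1" for q1 q2 a q1'
    proof -
      have "\<forall>n. sbisim n D1 E1 D2 E2 q1 q2"
        using related by (simp add: R_def)
      with D2(2) obtain q2' where q2': "(q2, a, q2') \<in> D2" "\<forall>n. sbisim n D1 E1 D2 E2 q1' q2'"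
        using step by (rule all_sbisim_successor)
      moreover have "q1' \<in> Q1" "q2' \<in> Q2"
        using step q2'(1) D1(1) D2(1) by auto
      ultimately show ?thesis
        unfolding R_def by auto
    qed
    show "\<exists>q1'. (q1, a, q1') \<in> D1 \<and> (q1', q2') \<in> R"
      if related: "(q1, q2) \<in> R" and step: "(q2, a, q2') \<in> D2" for q1 q2 a q2'
    proof -
      have "\<forall>n. sbisim n D2 E2 D1 E1 q2 q1"
        using related by (simp add: R_def sbisim_sym)
      with D1(2) obtain q1' where q1': "(q1, a, q1') \<in> D1" "\<forall>n. sbisim n D2 E2 D1 E1 q2' q1'"
        using step by (rule all_sbisim_successor)
      moreover have "q1' \<in> Q1" "q2' \<in> Q2"
        using step q1'(1) D1(1) D2(1) by auto
      ultimately show ?thesis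
        unfolding R_def by (auto intro: sbisim_sym)
    qed
  qed (auto simp: R_def)
  moreover have "(s1, s2) \<in> R"
    using fin1 fin2 all unfolding R_def finite_chart_def by auto
  ultimately show ?thesis
    unfolding chart_bisim_def by auto
qed

section \<open>The prechart of finite charts modulo bisimilarity\<close>

lemma ex_nat_chart_bisim:
  fixes C :: "('q, 'a, 'v) chart"
  assumes "finite_chart C"
  obtains C' :: "(nat, 'a, 'v) chart" where "finite_chart C'" and "chart_bisim C' C"
proof -
  obtain Q s D E where C: "C = (Q, s, D, E)"
    by (cases C)
  then have fin: "finite Q" "s \<in> Q" "D \<subseteq> Q \<times> UNIV \<times> Q" "E \<subseteq> Q \<times> UNIV" "finite D" "finite E"
    using assms by (auto simp: finite_chart_def)
  obtain f :: "'q \<Rightarrow> nat" where inj: "inj_on f Q"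
    using finite_imp_inj_to_nat_seg[OF fin(1)] by blast
  define D' where "D' = (\<lambda>(p, a, q). (f p, a, f q)) ` D"
  define E' where "E' = (\<lambda>(p, v). (f p, v)) ` E"
  have "finite_chart (f ` Q, f s, D', E')"
    using fin unfolding finite_chart_def D'_def E'_def by auto
  moreover have "chart_bisim (f ` Q, f s, D', E') C"
    using is_bisim_rename[OF inj fin(3,4)] fin(2)
    unfolding C chart_bisim_def D'_def E'_def by blast
  ultimately show thesis
    by (rule that)
qed

lemma cls_eq_if_chart_bisim: "chart_bisim C1 C2 \<Longrightarrow> cls C1 = cls C2"
  unfolding cls_def by (meson chart_bisim_sym chart_bisim_trans)

lemma cls_nonempty:
  assumes "finite_chart C"
  obtains Q' t D' E' where "(Q', t, D', E') \<in> cls C"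
proof -
  obtain C' :: "(nat, _, _) chart" where "finite_chart C'" "chart_bisim C' C"
    using assms by (rule ex_nat_chart_bisim)
  then have "C' \<in> cls C"
    by (simp add: cls_def)
  then show thesis
    using that by (cases C') blast
qed

lemma cls_in_Omega:
  assumes "finite_chart C"
  shows "cls C \<in> Omega"
proof -
  obtain C' :: "(nat, _, _) chart" where "finite_chart C'" "chart_bisim C' C"
    using assms by (rule ex_nat_chart_bisim)
  then show ?thesis
    unfolding Omega_def using cls_eq_if_chart_bisim by blast
qed

lemma om_trans_cls:
  assumes "finite_chart (Q, s, D, E)"
  shows "om_trans (cls (Q, s, D, E)) a w \<longleftrightarrow> (\<exists>s'. (s, a, s') \<in> D \<and> w = cls (Q, s', D, E))"
proof
  assume "om_trans (cls (Q, s, D, E)) a w"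
  then obtain Q' t D' E' t' where member: "(Q', t, D', E') \<in> cls (Q, s, D, E)"
    and t': "(t, a, t') \<in> D'" and w: "w = cls (Q', t', D', E')"
    unfolding om_trans_def by blast
  from member have "chart_bisim (Q', t, D', E') (Q, s, D, E)"
    by (simp add: cls_def)
  then obtain s' where "(s, a, s') \<in> D" "chart_bisim (Q', t', D', E') (Q, s', D, E)"
    using t' by (rule chart_bisim_step)
  then show "\<exists>s'. (s, a, s') \<in> D \<and> w = cls (Q, s', D, E)"
    using w cls_eq_if_chart_bisim by blast
next
  assume "\<exists>s'. (s, a, s') \<in> D \<and> w = cls (Q, s', D, E)"
  then obtain s' where s': "(s, a, s') \<in> D" and w: "w = cls (Q, s', D, E)"
    by blast
  obtain Q' t D' E' where member: "(Q', t, D', E') \<in> cls (Q, s, D, E)"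
    using cls_nonempty[OF assms] .
  then have "chart_bisim (Q, s, D, E) (Q', t, D', E')"
    by (simp add: cls_def chart_bisim_sym)
  then obtain t' where "(t, a, t') \<in> D'" "chart_bisim (Q, s', D, E) (Q', t', D', E')"
    using s' by (rule chart_bisim_step)
  then show "om_trans (cls (Q, s, D, E)) a w"
    unfolding om_trans_def using member w cls_eq_if_chart_bisim by blast
qed

lemma om_out_cls:
  assumes "finite_chart (Q, s, D, E)"
  shows "om_out (cls (Q, s, D, E)) v \<longleftrightarrow> v \<in> outs E s"
proof -
  have outs_eq: "outs E' t = outs E s" if "(Q', t, D', E') \<in> cls (Q, s, D, E)" for Q' t D' E'
  proof -
    from that have "chart_bisim (Q', t, D', E') (Q, s, D, E)"
      by (simp add: cls_def)
    then show ?thesis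
      by (rule chart_bisim_outs)
  qed
  show ?thesis
  proof
    assume "om_out (cls (Q, s, D, E)) v"
    then obtain Q' t D' E' where "(Q', t, D', E') \<in> cls (Q, s, D, E)" "v \<in> outs E' t"
      unfolding om_out_def outs_def by blast
    then show "v \<in> outs E s"
      using outs_eq by blast
  next
    assume "v \<in> outs E s"
    obtain Q' t D' E' where member: "(Q', t, D', E') \<in> cls (Q, s, D, E)"
      using cls_nonempty[OF assms] .
    with \<open>v \<in> outs E s\<close> have "(t, v) \<in> E'"
      using outs_eq unfolding outs_def by blast
    with member show "om_out (cls (Q, s, D, E)) v"
      unfolding om_out_def by blast
  qed
qed

lemma finite_chart_succ: "finite_chart (Q, s, D, E) \<Longrightarrow> (s, a, s') \<in> D \<Longrightarrow> finite_chart (Q, s', D, E)"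
  by (auto simp: finite_chart_def)

lemma Inl_in_om_beta_cls:
  "finite_chart (Q, s, D, E) \<Longrightarrow>
    Inl (a, w) \<in> om_beta (cls (Q, s, D, E)) \<longleftrightarrow> (\<exists>s'. (s, a, s') \<in> D \<and> w = cls (Q, s', D, E))"
  by (simp add: om_beta_def om_trans_cls)

lemma Inr_in_om_beta_cls:
  "finite_chart (Q, s, D, E) \<Longrightarrow> Inr v \<in> om_beta (cls (Q, s, D, E)) \<longleftrightarrow> v \<in> outs E s"
  by (simp add: om_beta_def om_out_cls)

lemma OmegaE:
  fixes w :: "('a, 'v) omega"
  assumes "w \<in> Omega"
  obtains Q s D E where "finite_chart (Q :: nat set, s, D, E)" and "w = cls (Q, s, D, E)"
proof -
  obtain C :: "(nat, 'a, 'v) chart" where "finite_chart C" "w = cls C"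
    using assms unfolding Omega_def by blast
  then show thesis
    using that by (cases C) blast
qed

interpretation Omega: image_finite_prechart Omega om_beta
proof
  fix w a w'
  assume "w \<in> Omega" and "Inl (a, w') \<in> om_beta w"
  then show "w' \<in> Omega"
    by (elim OmegaE) (auto simp: Inl_in_om_beta_cls intro: cls_in_Omega finite_chart_succ)
next
  fix w :: "('a, 'v) omega"
  assume "w \<in> Omega"
  then obtain Q s D E where fin: "finite_chart (Q :: nat set, s, D, E)" and w: "w = cls (Q, s, D, E)"
    by (rule OmegaE)
  have "om_beta w \<subseteq> (\<lambda>(p, a, q). Inl (a, cls (Q, q, D, E))) ` D \<union> (\<lambda>(p, v). Inr v) ` E"
  proof
    fix e assume "e \<in> om_beta w"
    with fin show "e \<in> (\<lambda>(p, a, q). Inl (a, cls (Q, q, D, E))) ` D \<union> (\<lambda>(p, v). Inr v) ` E"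
      unfolding w by (cases e) (auto simp: Inl_in_om_beta_cls Inr_in_om_beta_cls outs_def
          intro: rev_image_eqI)
  qed
  moreover have "finite D" "finite E"
    using fin by (auto simp: finite_chart_def)
  ultimately show "finite (om_beta w)"
    by (meson finite_Un finite_imageI finite_subset)
qed

lemma bd_eq_depth_metric: "bd = Omega.depth_metric"
  by (simp add: bd_def Omega.bd_of_eq_depth_metric)

lemma strat_bisim_cls_iff:
  assumes "finite_chart (Q1, s1, D1, E1)" and "finite_chart (Q2, s2, D2, E2)"
  shows "strat_bisim om_beta n (cls (Q1, s1, D1, E1)) (cls (Q2, s2, D2, E2)) \<longleftrightarrow>
    sbisim n D1 E1 D2 E2 s1 s2"
  using assms
proof (induction n arbitrary: s1 s2)
  case (Suc n)
  have IH: "strat_bisim om_beta n (cls (Q1, s1', D1, E1)) (cls (Q2, s2', D2, E2)) \<longleftrightarrow>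
      sbisim n D1 E1 D2 E2 s1' s2'" if "(s1, a, s1') \<in> D1" "(s2, b, s2') \<in> D2" for a b s1' s2'
    using Suc.prems that by (intro Suc.IH) (auto intro: finite_chart_succ)
  have "(\<forall>v. Inr v \<in> om_beta (cls (Q1, s1, D1, E1)) \<longleftrightarrow> Inr v \<in> om_beta (cls (Q2, s2, D2, E2))) \<longleftrightarrow>
      outs E1 s1 = outs E2 s2"
    using Suc.prems by (simp add: Inr_in_om_beta_cls set_eq_iff)
  moreover have "(\<forall>a x. Inl (a, x) \<in> om_beta (cls (Q1, s1, D1, E1)) \<longrightarrow>
        (\<exists>y. Inl (a, y) \<in> om_beta (cls (Q2, s2, D2, E2)) \<and> strat_bisim om_beta n x y)) \<longleftrightarrow>
      (\<forall>a s1'. (s1, a, s1') \<in> D1 \<longrightarrow> (\<exists>s2'. (s2, a, s2') \<in> D2 \<and> sbisim n D1 E1 D2 E2 s1' s2'))"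
    using Suc.prems IH by (auto simp: Inl_in_om_beta_cls) blast+
  moreover have "(\<forall>a y. Inl (a, y) \<in> om_beta (cls (Q2, s2, D2, E2)) \<longrightarrow>
        (\<exists>x. Inl (a, x) \<in> om_beta (cls (Q1, s1, D1, E1)) \<and> strat_bisim om_beta n x y)) \<longleftrightarrow>
      (\<forall>a s2'. (s2, a, s2') \<in> D2 \<longrightarrow> (\<exists>s1'. (s1, a, s1') \<in> D1 \<and> sbisim n D1 E1 D2 E2 s1' s2'))"
    using Suc.prems IH by (auto simp: Inl_in_om_beta_cls) blast+
  ultimately show ?case
    unfolding strat_bisim.simps(2) rel_branching_iff sbisim.simps by blast
qed simp

theorem mainTheorem1:
  fixes C1 :: "('q1, 'a, 'v) chart" and C2 :: "('q2, 'a, 'v) chart"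
    and Q1 :: "'q1 set" and s1 :: 'q1 and D1 and E1
    and Q2 :: "'q2 set" and s2 :: 'q2 and D2 and E2
  assumes "C1 = (Q1, s1, D1, E1)" and "C2 = (Q2, s2, D2, E2)"
    and "finite_chart C1" and "finite_chart C2"
  shows "(chart_bisim C1 C2 \<longrightarrow> bd (cls C1) (cls C2) = 0) \<and>
         (\<not> chart_bisim C1 C2 \<longrightarrow>
            (\<exists>n. sbisim n D1 E1 D2 E2 s1 s2 \<and>
                 (\<forall>m. sbisim m D1 E1 D2 E2 s1 s2 \<longrightarrow> m \<le> n) \<and>
                 bd (cls C1) (cls C2) = 1 / 2 ^ n))"
proof (intro conjI impI)
  have fin1: "finite_chart (Q1, s1, D1, E1)" and fin2: "finite_chart (Q2, s2, D2, E2)"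
    using assms by simp_all
  have bd: "bd (cls C1) (cls C2) = depth_dist om_beta (cls C1) (cls C2)"
    using assms(3,4) by (simp add: bd_eq_depth_metric Omega.depth_metric_def cls_in_Omega)
  show "chart_bisim C1 C2 \<Longrightarrow> bd (cls C1) (cls C2) = 0"
    using bd by (simp add: cls_eq_if_chart_bisim depth_dist_self)
  assume "\<not> chart_bisim C1 C2"
  then have "\<exists>n. \<not> sbisim n D1 E1 D2 E2 s1 s2"
    using chart_bisim_if_all_sbisim[OF fin1 fin2] assms(1,2) by blast
  then have "\<exists>j. \<not> \<not> sbisim j D1 E1 D2 E2 s1 s2 \<and> \<not> sbisim (Suc j) D1 E1 D2 E2 s1 s2"
    by (intro exists_least_lemma) simp_all
  then obtain j where j: "sbisim j D1 E1 D2 E2 s1 s2" "\<not> sbisim (Suc j) D1 E1 D2 E2 s1 s2"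
    by blast
  have levels: "strat_bisim om_beta n (cls C1) (cls C2) \<longleftrightarrow> sbisim n D1 E1 D2 E2 s1 s2" for n
    unfolding assms(1,2) using fin1 fin2 by (rule strat_bisim_cls_iff)
  have "bd (cls C1) (cls C2) = 1 / 2 ^ j"
    unfolding bd by (rule depth_dist_eq) (simp_all only: levels j not_False_eq_True)
  moreover have "m \<le> j" if "sbisim m D1 E1 D2 E2 s1 s2" for m
    using that j(2) by (meson not_less_eq_eq sbisim_antimono)
  ultimately show "\<exists>n. sbisim n D1 E1 D2 E2 s1 s2 \<and>
                 (\<forall>m. sbisim m D1 E1 D2 E2 s1 s2 \<longrightarrow> m \<le> n) \<and>
                 bd (cls C1) (cls C2) = 1 / 2 ^ n"
    using j(1) by blast
qed

end
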